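(* Let $T$ be a triangle of type $(90^\circ,60^\circ,30^\circ)$. Then $h(n,T)\le\frac{n^3}{16}$ for every positive integer $n$.
   Context: A triangle is of type $(\alpha,\beta,\gamma)$ if $\alpha\ge\beta\ge\gamma$ are its interior angles in degrees. For a triangle $T$ with side lengths $a,b,c$ and $\varepsilon>0$, with $\varepsilon'=\varepsilon\min\{a,b,c\}$, a triangle $A'B'C'$ is $\varepsilon$-congruent to $T$ if there are $A,B,C\in\mathbb{R}^2$ with $ABC$ congruent to $T$ and $A',B',C'$ within distance $\varepsilon'$ of $A,B,C$ respectively. $h(n,T,\varepsilon)$ is the maximum over $n$-point sets $P\subseteq\mathbb{R}^2$ of the number of 3-subsets of $P$ forming triangles $\varepsilon$-congruent to $T$, and $h(n,T)=\min_{\varepsilon>0}h(n,T,\varepsilon)$. *)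

theory Defs
  imports "HOL-Analysis.Analysis"
begin

type_synonym pt = "real^2"

definition angle_at :: "pt \<Rightarrow> pt \<Rightarrow> pt \<Rightarrow> real" where
  "angle_at A B C = arccos (((B - A) \<bullet> (C - A)) / (norm (B - A) * norm (C - A)))"

definition triangle_type :: "pt \<times> pt \<times> pt \<Rightarrow> real \<Rightarrow> real \<Rightarrow> real \<Rightarrow> bool" where
  "triangle_type T \<alpha> \<beta> \<gamma> \<longleftrightarrow>
     (case T of (A, B, C) \<Rightarrow>
        A \<noteq> B \<and> B \<noteq> C \<and> A \<noteq> C \<and> \<alpha> \<ge> \<beta> \<and> \<beta> \<ge> \<gamma> \<and>
        {#angle_at A B C, angle_at B C A, angle_at C A B#}
          = {#\<alpha> * pi / 180, \<beta> * pi / 180, \<gamma> * pi / 180#})"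

definition min_side :: "pt \<times> pt \<times> pt \<Rightarrow> real" where
  "min_side T = (case T of (A, B, C) \<Rightarrow> min (dist A B) (min (dist B C) (dist A C)))"

definition eps_congruent :: "real \<Rightarrow> pt \<times> pt \<times> pt \<Rightarrow> pt \<Rightarrow> pt \<Rightarrow> pt \<Rightarrow> bool" where
  "eps_congruent \<epsilon> T A' B' C' \<longleftrightarrow>
     (case T of (TA, TB, TC) \<Rightarrow>
       (\<exists>A B C. dist A B = dist TA TB \<and> dist B C = dist TB TC \<and> dist A C = dist TA TC \<and>
          dist A' A \<le> \<epsilon> * min_side T \<and> dist B' B \<le> \<epsilon> * min_side T \<and>
          dist C' C \<le> \<epsilon> * min_side T))"

definition count_cong :: "real \<Rightarrow> pt \<times> pt \<times> pt \<Rightarrow> pt set \<Rightarrow> nat" where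
  "count_cong \<epsilon> T P = card {S. S \<subseteq> P \<and> card S = 3 \<and>
       (\<exists>a b c. S = {a, b, c} \<and> eps_congruent \<epsilon> T a b c)}"

definition h_eps :: "nat \<Rightarrow> pt \<times> pt \<times> pt \<Rightarrow> real \<Rightarrow> nat" where
  "h_eps n T \<epsilon> = Sup {count_cong \<epsilon> T P | P. finite P \<and> card P = n}"

definition h :: "nat \<Rightarrow> pt \<times> pt \<times> pt \<Rightarrow> nat" where
  "h n T = Inf {h_eps n T \<epsilon> | \<epsilon>. \<epsilon> > 0}"

end

theory Submission
  imports Defs
begin

text \<open>Let \<open>L\<close> be the shortest side of \<open>T\<close>, so that the squared sides of \<open>T\<close> are
  \<open>L\<^sup>2, 3 L\<^sup>2, 4 L\<^sup>2\<close>. For \<open>\<epsilon> = 1 / 100000\<close> the \<open>\<epsilon>\<close>-congruent copies of \<open>T\<close> in a point set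
  form a 3-uniform hypergraph, and rounding squared distances to \<open>1, 3, 4\<close> (in units of \<open>L\<^sup>2\<close>)
  colours its pairs so that every edge has exactly one hypotenuse pair, of colour \<open>4\<close>.
  The Cayley--Menger determinant of four planar points vanishes; being an integer close to
  zero on the colours, it vanishes on them too. A finite case analysis with this relation
  shows that inside any vertex set all of whose pairs lie in edges, the hypotenuse pairs form
  a matching. The Frankl--Fueredi symmetrisation moves weight onto such a set without
  decreasing the Lagrangian (the sum over all edges of the product of their vertex weights),
  and there counting every edge through its hypotenuse pair gives the bound
  \<open>(\<Sum> w)\<^sup>3 / 16\<close>; weights \<open>1\<close> give \<open>n\<^sup>3 / 16\<close>.\<close>

section \<open>The squared sides of a (90, 60, 30) triangle\<close>

lemma insert3_eq_distinct_cases: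
  assumes "{a, b, c} = {x, y, z}" "x \<noteq> y" "y \<noteq> z" "x \<noteq> z"
  shows "(a = x \<and> b = y \<and> c = z) \<or> (a = x \<and> b = z \<and> c = y) \<or> (a = y \<and> b = x \<and> c = z) \<or>
         (a = y \<and> b = z \<and> c = x) \<or> (a = z \<and> b = x \<and> c = y) \<or> (a = z \<and> b = y \<and> c = x)"
proof -
  have "a \<in> {x, y, z}" "b \<in> {x, y, z}" "c \<in> {x, y, z}" "x \<in> {a, b, c}" "y \<in> {a, b, c}" "z \<in> {a, b, c}"
    using assms(1) by blast+
  then show ?thesis
    using assms(2-4) by auto
qed

lemma angle_at_commute: "angle_at A B C = angle_at A C B"
  unfolding angle_at_def by (simp add: inner_commute mult.commute)

lemma cos_angle_at:
  assumes "A \<noteq> B" "A \<noteq> C"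
  shows "cos (angle_at A B C) = ((B - A) \<bullet> (C - A)) / (norm (B - A) * norm (C - A))"
proof -
  let ?t = "((B - A) \<bullet> (C - A)) / (norm (B - A) * norm (C - A))"
  have "\<bar>(B - A) \<bullet> (C - A)\<bar> \<le> norm (B - A) * norm (C - A)"
    by (rule Cauchy_Schwarz_ineq2)
  then have "\<bar>?t\<bar> \<le> 1"
    using assms by (simp add: abs_divide divide_le_eq_1)
  then have "-1 \<le> ?t" "?t \<le> 1"
    by linarith+
  then show ?thesis
    unfolding angle_at_def by (rule cos_arccos)
qed

definition sq_sides :: "pt \<Rightarrow> pt \<Rightarrow> pt \<Rightarrow> real set" where
  "sq_sides A B C = {(dist A B)\<^sup>2, (dist B C)\<^sup>2, (dist A C)\<^sup>2}"

lemma sq_sides_right_60: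
  assumes "R \<noteq> X" "R \<noteq> Y" "X \<noteq> Y"
    and right: "angle_at R X Y = pi / 2" and sixty: "angle_at X R Y = pi / 3"
  shows "sq_sides R X Y = {(dist R X)\<^sup>2, 3 * (dist R X)\<^sup>2, 4 * (dist R X)\<^sup>2}"
proof -
  define u v where "u = X - R" and "v = Y - R"
  have "u \<noteq> 0" "v \<noteq> 0" "v - u \<noteq> 0"
    using assms(1-3) by (auto simp: u_def v_def)
  have "cos (angle_at R X Y) = 0"
    unfolding right by simp
  then have orth: "u \<bullet> v = 0"
    using cos_angle_at[of R X Y] assms(1,2) by (simp add: u_def v_def)
  have "cos (angle_at X R Y) = (u \<bullet> u) / (norm u * norm (v - u))"
    using cos_angle_at[of X R Y] assms(1,3) orth
    by (simp add: u_def v_def norm_minus_commute inner_diff_right inner_commute)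
  then have "(norm u)\<^sup>2 = norm u * norm (v - u) / 2"
    using sixty \<open>u \<noteq> 0\<close> \<open>v - u \<noteq> 0\<close> by (simp add: cos_60 field_simps power2_norm_eq_inner)
  then have hyp: "norm (v - u) = 2 * norm u"
    using \<open>u \<noteq> 0\<close> by (simp add: power2_eq_square field_simps)
  have "(norm (v - u))\<^sup>2 = (norm u)\<^sup>2 + (norm v)\<^sup>2"
    using orth by (simp add: power2_norm_eq_inner inner_diff_left inner_diff_right inner_commute)
  then have "(norm v)\<^sup>2 = 3 * (norm u)\<^sup>2"
    using hyp by (simp add: power_mult_distrib)
  moreover have "dist R X = norm u" "dist X Y = norm (v - u)" "dist R Y = norm v"
    by (simp_all add: u_def v_def dist_norm norm_minus_commute)
  ultimately show ?thesis
    using hyp by (simp add: sq_sides_def power_mult_distrib insert_commute)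
qed

lemma min_side_eq_of_sq_sides:
  assumes "L > 0" and sides: "sq_sides A B C = {L\<^sup>2, 3 * L\<^sup>2, 4 * L\<^sup>2}"
  shows "min_side (A, B, C) = L"
proof -
  have "L \<le> d" if "d\<^sup>2 \<in> sq_sides A B C" "d \<ge> 0" for d
  proof (rule power2_le_imp_le)
    show "L\<^sup>2 \<le> d\<^sup>2"
      using that(1) sides by auto
  qed (fact that(2))
  then have "L \<le> dist A B" "L \<le> dist B C" "L \<le> dist A C"
    by (simp_all add: sq_sides_def)
  moreover have "L\<^sup>2 \<in> {(dist A B)\<^sup>2, (dist B C)\<^sup>2, (dist A C)\<^sup>2}"
    using sides by (simp add: sq_sides_def)
  then have "L \<in> {dist A B, dist B C, dist A C}"
    using \<open>L > 0\<close> by (auto simp: power2_eq_iff_nonneg)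
  ultimately show ?thesis
    unfolding min_side_def by auto
qed

lemma triangle_90_60_30_sq_sides:
  assumes "triangle_type (A, B, C) 90 60 30"
  shows "min_side (A, B, C) > 0"
    and "sq_sides A B C = {(min_side (A, B, C))\<^sup>2, 3 * (min_side (A, B, C))\<^sup>2, 4 * (min_side (A, B, C))\<^sup>2}"
proof -
  have distinct: "A \<noteq> B" "B \<noteq> C" "A \<noteq> C"
    using assms unfolding triangle_type_def by auto
  have "{#angle_at A B C, angle_at B C A, angle_at C A B#} = {#pi / 2, pi / 3, pi / 6#}"
    using assms unfolding triangle_type_def by simp
  then have angles: "{angle_at A B C, angle_at B C A, angle_at C A B} = {pi / 2, pi / 3, pi / 6}"
    by (metis set_mset_add_mset_insert set_mset_empty)
  have "\<exists>L > 0. sq_sides A B C = {L\<^sup>2, 3 * L\<^sup>2, 4 * L\<^sup>2}"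
  proof -
    have right_60: "\<exists>L > 0. sq_sides R X Y = {L\<^sup>2, 3 * L\<^sup>2, 4 * L\<^sup>2}"
      if "R \<noteq> X" "R \<noteq> Y" "X \<noteq> Y" "angle_at R X Y = pi / 2" "angle_at X R Y = pi / 3" for R X Y
      using sq_sides_right_60[OF that] that(1) by (intro exI[of _ "dist R X"]) auto
    have "sq_sides A C B = sq_sides A B C" "sq_sides B A C = sq_sides A B C"
      "sq_sides B C A = sq_sides A B C" "sq_sides C A B = sq_sides A B C" "sq_sides C B A = sq_sides A B C"
      by (auto simp: sq_sides_def dist_commute)
    then show ?thesis
      using insert3_eq_distinct_cases[OF angles] distinct
        right_60[of A B C] right_60[of A C B] right_60[of B A C]
        right_60[of B C A] right_60[of C A B] right_60[of C B A]
      by (auto simp: angle_at_commute)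
  qed
  then obtain L where "L > 0" "sq_sides A B C = {L\<^sup>2, 3 * L\<^sup>2, 4 * L\<^sup>2}"
    by blast
  moreover from this have "min_side (A, B, C) = L"
    by (rule min_side_eq_of_sq_sides)
  ultimately show "min_side (A, B, C) > 0"
    and "sq_sides A B C = {(min_side (A, B, C))\<^sup>2, 3 * (min_side (A, B, C))\<^sup>2, 4 * (min_side (A, B, C))\<^sup>2}"
    by simp_all
qed

section \<open>The Cayley--Menger relation and its rounding\<close>

text \<open>Half the Cayley--Menger determinant of four points with squared distances
  \<open>d01, d02, d03, d12, d13, d23\<close>; it vanishes for any four points of the plane.\<close>

definition cayley_menger :: "real \<Rightarrow> real \<Rightarrow> real \<Rightarrow> real \<Rightarrow> real \<Rightarrow> real \<Rightarrow> real" where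
  "cayley_menger d01 d02 d03 d12 d13 d23 =
     - d12*d13*d23 + d03*d12*d23 + d03*d12*d13 - d03*d12*d12 - d03*d03*d12 + d02*d13*d23
     - d02*d13*d13 + d02*d12*d13 - d02*d03*d23 + d02*d03*d13 + d02*d03*d12 - d02*d02*d13
     - d01*d23*d23 + d01*d13*d23 + d01*d12*d23 + d01*d03*d23 - d01*d03*d13 + d01*d03*d12
     + d01*d02*d23 + d01*d02*d13 - d01*d02*d12 - d01*d01*d23"

lemma dist_vec2_sq: "(dist (p :: real^2) q)\<^sup>2 = (p$1 - q$1)\<^sup>2 + (p$2 - q$2)\<^sup>2"
  by (simp add: dist_vec_def L2_set_def sum_2 dist_real_def power2_abs)

lemma cayley_menger_planar:
  fixes p0 p1 p2 p3 :: "real^2"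
  shows "cayley_menger ((dist p0 p1)\<^sup>2) ((dist p0 p2)\<^sup>2) ((dist p0 p3)\<^sup>2)
           ((dist p1 p2)\<^sup>2) ((dist p1 p3)\<^sup>2) ((dist p2 p3)\<^sup>2) = 0"
  unfolding dist_vec2_sq cayley_menger_def by algebra

lemma cayley_menger_scale:
  "cayley_menger (t*a) (t*b) (t*c) (t*d) (t*e) (t*f) = t^3 * cayley_menger a b c d e f"
  by (simp add: cayley_menger_def algebra_simps power3_eq_cube)

lemma cayley_menger_Ints:
  "a \<in> \<int> \<Longrightarrow> b \<in> \<int> \<Longrightarrow> c \<in> \<int> \<Longrightarrow> d \<in> \<int> \<Longrightarrow> e \<in> \<int> \<Longrightarrow> f \<in> \<int> \<Longrightarrow>
    cayley_menger a b c d e f \<in> \<int>"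
  unfolding cayley_menger_def by (intro Ints_diff Ints_add Ints_mult Ints_minus) auto

lemma abs_triple_product_diff_le:
  fixes x y z a b c e :: real
  assumes "\<bar>x - a\<bar> \<le> e" "\<bar>y - b\<bar> \<le> e" "\<bar>z - c\<bar> \<le> e" "\<bar>a\<bar> \<le> 4" "\<bar>b\<bar> \<le> 4" "\<bar>c\<bar> \<le> 4" "e \<le> 1"
  shows "\<bar>x*y*z - a*b*c\<bar> \<le> 61 * e"
proof -
  have "e \<ge> 0" "\<bar>y\<bar> \<le> 5" "\<bar>z\<bar> \<le> 5"
    using assms by linarith+
  have yz: "\<bar>y\<bar> * \<bar>z\<bar> \<le> 5 * 5"
    by (rule mult_mono[OF \<open>\<bar>y\<bar> \<le> 5\<close> \<open>\<bar>z\<bar> \<le> 5\<close>]) auto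
  have bz: "\<bar>y - b\<bar> * \<bar>z\<bar> \<le> e * 5"
    by (rule mult_mono[OF assms(2) \<open>\<bar>z\<bar> \<le> 5\<close>]) (auto simp: \<open>e \<ge> 0\<close>)
  have ab: "\<bar>a\<bar> * \<bar>b\<bar> \<le> 4 * 4"
    by (rule mult_mono[OF assms(4,5)]) auto
  have "\<bar>x - a\<bar> * (\<bar>y\<bar> * \<bar>z\<bar>) \<le> e * (5 * 5)"
    by (rule mult_mono[OF assms(1) yz]) (auto simp: \<open>e \<ge> 0\<close>)
  moreover have "\<bar>a\<bar> * (\<bar>y - b\<bar> * \<bar>z\<bar>) \<le> 4 * (e * 5)"
    by (rule mult_mono[OF assms(4) bz]) (auto simp: \<open>e \<ge> 0\<close>)
  moreover have "(\<bar>a\<bar> * \<bar>b\<bar>) * \<bar>z - c\<bar> \<le> (4 * 4) * e"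
    by (rule mult_mono[OF ab assms(3)]) auto
  moreover have "x*y*z - a*b*c = (x - a)*(y*z) + a*((y - b)*z) + (a*b)*(z - c)"
    by (simp add: algebra_simps)
  then have "\<bar>x*y*z - a*b*c\<bar> \<le> \<bar>(x - a)*(y*z)\<bar> + \<bar>a*((y - b)*z)\<bar> + \<bar>(a*b)*(z - c)\<bar>"
    using abs_triangle_ineq[of "(x - a)*(y*z) + a*((y - b)*z)" "(a*b)*(z - c)"]
      abs_triangle_ineq[of "(x - a)*(y*z)" "a*((y - b)*z)"] by linarith
  ultimately show ?thesis
    by (simp add: abs_mult)
qed

definition cubic_form :: "(real \<times> nat \<times> nat \<times> nat) list \<Rightarrow> (nat \<Rightarrow> real) \<Rightarrow> real" where
  "cubic_form ms r = (\<Sum>(s, i, j, k) \<leftarrow> ms. s * r i * r j * r k)"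

lemma cubic_form_perturb:
  fixes r c :: "nat \<Rightarrow> real" and e :: real
  assumes ms: "\<forall>(s, i, j, k) \<in> set ms. \<bar>s\<bar> = 1 \<and> i < N \<and> j < N \<and> k < N"
    and r: "\<And>i. i < N \<Longrightarrow> \<bar>r i - c i\<bar> \<le> e" and c: "\<And>i. i < N \<Longrightarrow> \<bar>c i\<bar> \<le> 4" and "e \<le> 1"
  shows "\<bar>cubic_form ms r - cubic_form ms c\<bar> \<le> length ms * 61 * e"
proof -
  define F where "F = (\<lambda>(s, i, j, k). s * (r i * r j * r k - c i * c j * c k))"
  have "cubic_form ms r - cubic_form ms c = (\<Sum>t \<leftarrow> ms. F t)"
    unfolding cubic_form_def F_def sum_list_subtractf[symmetric]
    by (intro arg_cong[where f = sum_list] map_cong) (auto simp: algebra_simps)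
  also have "\<bar>\<dots>\<bar> \<le> (\<Sum>t \<leftarrow> ms. \<bar>F t\<bar>)"
    using sum_list_abs[of "map F ms"] by (simp add: comp_def)
  also have "\<dots> \<le> (\<Sum>t \<leftarrow> ms. 61 * e)"
  proof (rule sum_list_mono)
    fix t assume "t \<in> set ms"
    then obtain s i j k where t: "t = (s, i, j, k)" "\<bar>s\<bar> = 1" "i < N" "j < N" "k < N"
      using ms by (cases t) auto
    have "\<bar>r i * r j * r k - c i * c j * c k\<bar> \<le> 61 * e"
      using r c t \<open>e \<le> 1\<close> by (intro abs_triple_product_diff_le) auto
    then show "\<bar>F t\<bar> \<le> 61 * e"
      using t by (simp add: F_def abs_mult)
  qed
  finally show ?thesis
    by (simp add: sum_list_triv)
qed

text \<open>The monomials of \<^const>\<open>cayley_menger\<close> as (sign, i, j, k), the indices \<open>0, ..., 5\<close>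
  referring to the arguments \<open>d01, ..., d23\<close> in order.\<close>

definition cayley_menger_monomials :: "(real \<times> nat \<times> nat \<times> nat) list" where
  "cayley_menger_monomials =
    [(-1,3,4,5), (1,2,3,5), (1,2,3,4), (-1,2,3,3), (-1,2,2,3), (1,1,4,5), (-1,1,4,4), (1,1,3,4),
     (-1,1,2,5), (1,1,2,4), (1,1,2,3), (-1,1,1,4), (-1,0,5,5), (1,0,4,5), (1,0,3,5), (1,0,2,5),
     (-1,0,2,4), (1,0,2,3), (1,0,1,5), (1,0,1,4), (-1,0,1,3), (-1,0,0,5)]"

lemma cayley_menger_cubic_form:
  "cayley_menger a b c d e f = cubic_form cayley_menger_monomials (\<lambda>n. [a, b, c, d, e, f] ! n)"
  by (simp add: cayley_menger_def cubic_form_def cayley_menger_monomials_def algebra_simps)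

lemma cayley_menger_perturb:
  assumes "\<bar>a' - a\<bar> \<le> \<delta>" "\<bar>b' - b\<bar> \<le> \<delta>" "\<bar>c' - c\<bar> \<le> \<delta>"
    "\<bar>d' - d\<bar> \<le> \<delta>" "\<bar>e' - e\<bar> \<le> \<delta>" "\<bar>f' - f\<bar> \<le> \<delta>"
    and "\<bar>a\<bar> \<le> 4" "\<bar>b\<bar> \<le> 4" "\<bar>c\<bar> \<le> 4" "\<bar>d\<bar> \<le> 4" "\<bar>e\<bar> \<le> 4" "\<bar>f\<bar> \<le> 4"
    and "\<delta> \<le> 1"
  shows "\<bar>cayley_menger a' b' c' d' e' f' - cayley_menger a b c d e f\<bar> \<le> 1342 * \<delta>"
proof -
  have six: "i = 0 \<or> i = 1 \<or> i = 2 \<or> i = 3 \<or> i = 4 \<or> i = 5" if "i < 6" for i :: nat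
    using that by auto
  have "\<bar>cubic_form cayley_menger_monomials (\<lambda>n. [a', b', c', d', e', f'] ! n)
         - cubic_form cayley_menger_monomials (\<lambda>n. [a, b, c, d, e, f] ! n)\<bar>
        \<le> length cayley_menger_monomials * 61 * \<delta>"
  proof (rule cubic_form_perturb)
    show "\<forall>(s, i, j, k) \<in> set cayley_menger_monomials. \<bar>s\<bar> = 1 \<and> i < 6 \<and> j < 6 \<and> k < 6"
      by (simp add: cayley_menger_monomials_def)
    show "\<bar>[a', b', c', d', e', f'] ! i - [a, b, c, d, e, f] ! i\<bar> \<le> \<delta>" if "i < 6" for i
      using six[OF that] assms(1-6) by (elim disjE) simp_all
    show "\<bar>[a, b, c, d, e, f] ! i\<bar> \<le> 4" if "i < 6" for i
      using six[OF that] assms(7-12) by (elim disjE) simp_all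
  qed (fact assms(13))
  then show ?thesis
    by (simp add: cayley_menger_cubic_form cayley_menger_monomials_def)
qed

lemma cayley_menger_eq_0_of_approx_sq_dists:
  fixes p0 p1 p2 p3 :: "real^2"
  assumes "L > 0" "\<delta> < 1 / 1342"
    and classes: "a \<in> {1, 3, 4}" "b \<in> {1, 3, 4}" "c \<in> {1, 3, 4}" "d \<in> {1, 3, 4}" "e \<in> {1, 3, 4}" "f \<in> {1, 3, 4}"
    and approx: "\<bar>(dist p0 p1)\<^sup>2 - a * L\<^sup>2\<bar> \<le> \<delta> * L\<^sup>2" "\<bar>(dist p0 p2)\<^sup>2 - b * L\<^sup>2\<bar> \<le> \<delta> * L\<^sup>2"
      "\<bar>(dist p0 p3)\<^sup>2 - c * L\<^sup>2\<bar> \<le> \<delta> * L\<^sup>2" "\<bar>(dist p1 p2)\<^sup>2 - d * L\<^sup>2\<bar> \<le> \<delta> * L\<^sup>2"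
      "\<bar>(dist p1 p3)\<^sup>2 - e * L\<^sup>2\<bar> \<le> \<delta> * L\<^sup>2" "\<bar>(dist p2 p3)\<^sup>2 - f * L\<^sup>2\<bar> \<le> \<delta> * L\<^sup>2"
  shows "cayley_menger a b c d e f = 0"
proof -
  have small: "\<bar>k\<bar> \<le> 4" and integer: "k \<in> \<int>" if "k \<in> {1, 3, 4}" for k :: real
    using that by auto
  define t where "t = 1 / L\<^sup>2"
  have "t > 0"
    using \<open>L > 0\<close> by (simp add: t_def)
  have scaled: "\<bar>t * x - k\<bar> \<le> \<delta>" if "\<bar>x - k * L\<^sup>2\<bar> \<le> \<delta> * L\<^sup>2" for x k
  proof -
    have "\<bar>t * x - k\<bar> = t * \<bar>x - k * L\<^sup>2\<bar>"
      using \<open>L > 0\<close> \<open>t > 0\<close> by (simp add: t_def abs_mult[symmetric] field_simps)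
    also have "\<dots> \<le> t * (\<delta> * L\<^sup>2)"
      using that \<open>t > 0\<close> by (simp add: mult_left_mono)
    also have "\<dots> = \<delta>"
      using \<open>L > 0\<close> by (simp add: t_def)
    finally show ?thesis .
  qed
  have "cayley_menger (t * (dist p0 p1)\<^sup>2) (t * (dist p0 p2)\<^sup>2) (t * (dist p0 p3)\<^sup>2)
      (t * (dist p1 p2)\<^sup>2) (t * (dist p1 p3)\<^sup>2) (t * (dist p2 p3)\<^sup>2) = 0"
    unfolding cayley_menger_scale cayley_menger_planar by simp
  moreover have "\<bar>cayley_menger (t * (dist p0 p1)\<^sup>2) (t * (dist p0 p2)\<^sup>2) (t * (dist p0 p3)\<^sup>2)
      (t * (dist p1 p2)\<^sup>2) (t * (dist p1 p3)\<^sup>2) (t * (dist p2 p3)\<^sup>2) - cayley_menger a b c d e f\<bar> \<le> 1342 * \<delta>"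
    using small[OF classes(1)] small[OF classes(2)] small[OF classes(3)] small[OF classes(4)]
      small[OF classes(5)] small[OF classes(6)] \<open>\<delta> < 1 / 1342\<close>
    by (intro cayley_menger_perturb[OF scaled[OF approx(1)] scaled[OF approx(2)] scaled[OF approx(3)]
        scaled[OF approx(4)] scaled[OF approx(5)] scaled[OF approx(6)]]) simp_all
  ultimately have "\<bar>cayley_menger a b c d e f\<bar> < 1"
    using \<open>\<delta> < 1 / 1342\<close> by linarith
  moreover have "cayley_menger a b c d e f \<in> \<int>"
    using integer[OF classes(1)] integer[OF classes(2)] integer[OF classes(3)] integer[OF classes(4)]
      integer[OF classes(5)] integer[OF classes(6)] by (rule cayley_menger_Ints)
  ultimately show ?thesis
    using Ints_nonzero_abs_less1 by blast
qed

section \<open>Covered colourings\<close>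

lemma insert_4_eq_134:
  "{4, a, b} = {1, 3, 4 :: real} \<Longrightarrow> (a = 1 \<and> b = 3) \<or> (a = 3 \<and> b = 1)"
  using insert3_eq_distinct_cases[of 4 a b 1 3 4] by auto

lemma insert_1_eq_134:
  "{1, a, b} = {1, 3, 4 :: real} \<Longrightarrow> (a = 3 \<and> b = 4) \<or> (a = 4 \<and> b = 3)"
  using insert3_eq_distinct_cases[of 1 a b 1 3 4] by auto

text \<open>An abstraction of a point set \<open>S\<close> in which every pair is a side of a near-copy of \<open>T\<close>
  inside \<open>S\<close>: \<open>col p q\<close> stands for the squared distance in units of \<open>L\<^sup>2\<close>, rounded to
  \<open>1\<close>, \<open>3\<close> or \<open>4\<close>, and only the Cayley--Menger relation of the true distances is retained.\<close>

locale triangle_covered_coloring =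
  fixes S :: "'a set" and col :: "'a \<Rightarrow> 'a \<Rightarrow> real"
  assumes col_commute: "col u v = col v u"
    and cayley_menger_col: "\<lbrakk>p0 \<in> S; p1 \<in> S; p2 \<in> S; p3 \<in> S;
        col p0 p1 \<in> {1, 3, 4}; col p0 p2 \<in> {1, 3, 4}; col p0 p3 \<in> {1, 3, 4};
        col p1 p2 \<in> {1, 3, 4}; col p1 p3 \<in> {1, 3, 4}; col p2 p3 \<in> {1, 3, 4}\<rbrakk> \<Longrightarrow>
      cayley_menger (col p0 p1) (col p0 p2) (col p0 p3) (col p1 p2) (col p1 p3) (col p2 p3) = 0"
    and covered: "\<lbrakk>u \<in> S; v \<in> S; u \<noteq> v\<rbrakk> \<Longrightarrow>
      \<exists>z \<in> S. z \<noteq> u \<and> z \<noteq> v \<and> {col u v, col u z, col v z} = {1, 3, 4}"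
begin

lemma col_in_134: "\<lbrakk>u \<in> S; v \<in> S; u \<noteq> v\<rbrakk> \<Longrightarrow> col u v \<in> {1, 3, 4}"
  using covered by blast

lemma cayley_menger_col_eq_0:
  assumes "p0 \<in> S" "p1 \<in> S" "p2 \<in> S" "p3 \<in> S"
    and "p0 \<noteq> p1" "p0 \<noteq> p2" "p0 \<noteq> p3" "p1 \<noteq> p2" "p1 \<noteq> p3" "p2 \<noteq> p3"
  shows "cayley_menger (col p0 p1) (col p0 p2) (col p0 p3) (col p1 p2) (col p1 p3) (col p2 p3) = 0"
  using assms by (intro cayley_menger_col col_in_134) auto

text \<open>In the configurations excluded below, \<open>x y y'\<close> is an equilateral triangle of squared
  side \<open>4\<close>, and \<open>z\<close> and \<open>q\<close> are the midpoints of \<open>x y'\<close> and \<open>x y\<close>.\<close>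

lemma no_two_side_midpoints:
  assumes S: "x \<in> S" "y \<in> S" "y' \<in> S" "z \<in> S" "q \<in> S"
    and cols: "col x y = 4" "col x y' = 4" "col y y' = 4" "col x z = 1" "col y z = 3" "col y' z = 1"
      "col x q = 1" "col y q = 1" "col y' q = 3" "col z q = 1"
  shows False
proof -
  have distinct: "x \<noteq> y" "x \<noteq> y'" "x \<noteq> z" "x \<noteq> q" "y \<noteq> y'" "y \<noteq> z" "y \<noteq> q"
      "y' \<noteq> z" "y' \<noteq> q" "z \<noteq> q"
    using cols by (auto simp: col_commute)
  obtain r where r: "r \<in> S" "r \<noteq> z" "r \<noteq> q" "{1, col z r, col q r} = {1, 3, 4}"
    using covered[OF S(4,5) \<open>z \<noteq> q\<close>] cols(10) by auto
  have zr_qr: "(col z r = 3 \<and> col q r = 4) \<or> (col z r = 4 \<and> col q r = 3)"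
    using r(4) by (rule insert_1_eq_134)
  then have "x \<noteq> r" "y \<noteq> r" "y' \<noteq> r"
    using cols by (auto simp: col_commute)
  then have "col x r \<in> {1, 3, 4}" "col y r \<in> {1, 3, 4}" "col y' r \<in> {1, 3, 4}"
    using S r(1) by (metis col_in_134)+
  moreover note cm = cayley_menger_col_eq_0[OF _ _ _ r(1)]
  have "cayley_menger 4 4 (col x r) 4 (col y r) (col y' r) = 0"
    "cayley_menger 4 1 (col x r) 3 (col y r) (col z r) = 0"
    "cayley_menger 4 1 (col x r) 1 (col y r) (col q r) = 0"
    "cayley_menger 4 1 (col x r) 1 (col y' r) (col z r) = 0"
    "cayley_menger 4 1 (col x r) 3 (col y' r) (col q r) = 0"
    "cayley_menger 1 1 (col x r) 1 (col z r) (col q r) = 0"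
    "cayley_menger 4 3 (col y r) 1 (col y' r) (col z r) = 0"
    "cayley_menger 4 1 (col y r) 3 (col y' r) (col q r) = 0"
    "cayley_menger 3 1 (col y r) 1 (col z r) (col q r) = 0"
    "cayley_menger 1 3 (col y' r) 1 (col z r) (col q r) = 0"
    using cm[of x y y'] cm[of x y z] cm[of x y q] cm[of x y' z] cm[of x y' q] cm[of x z q]
      cm[of y y' z] cm[of y y' q] cm[of y z q] cm[of y' z q] S distinct r(2,3) \<open>x \<noteq> r\<close> \<open>y \<noteq> r\<close> \<open>y' \<noteq> r\<close>
    by (simp_all add: cols)
  ultimately show False
    using zr_qr by (auto simp: cayley_menger_def)
qed

lemma no_equilateral_with_midpoint:
  assumes S: "x \<in> S" "y \<in> S" "y' \<in> S" "z \<in> S" and "x \<noteq> y'"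
    and cols: "col x y = 4" "col x y' = 4" "col y y' = 4" "col x z = 1" "col y z = 3" "col y' z = 1"
  shows False
proof -
  have distinct: "x \<noteq> y" "x \<noteq> z" "y \<noteq> y'" "y \<noteq> z" "y' \<noteq> z"
    using cols by (auto simp: col_commute)
  obtain q where q: "q \<in> S" "q \<noteq> x" "q \<noteq> y'" "{4, col x q, col y' q} = {1, 3, 4}"
    using covered[OF S(1,3) \<open>x \<noteq> y'\<close>] cols(2) by auto
  have xq_y'q: "(col x q = 1 \<and> col y' q = 3) \<or> (col x q = 3 \<and> col y' q = 1)"
    using q(4) by (rule insert_4_eq_134)
  then have "y \<noteq> q" "z \<noteq> q"
    using cols by (auto simp: col_commute)
  then have "col y q \<in> {1, 3, 4}" "col z q \<in> {1, 3, 4}"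
    using S q(1) by (metis col_in_134)+
  moreover note cm = cayley_menger_col_eq_0[OF _ _ _ q(1)]
  have "cayley_menger 4 4 (col x q) 4 (col y q) (col y' q) = 0"
    "cayley_menger 4 1 (col x q) 3 (col y q) (col z q) = 0"
    "cayley_menger 4 1 (col x q) 1 (col y' q) (col z q) = 0"
    "cayley_menger 4 3 (col y q) 1 (col y' q) (col z q) = 0"
    using cm[of x y y'] cm[of x y z] cm[of x y' z] cm[of y y' z] S distinct q(2,3)
      \<open>x \<noteq> y'\<close> \<open>y \<noteq> q\<close> \<open>z \<noteq> q\<close>
    by (simp_all add: cols)
  ultimately have "(col x q = 1 \<and> col y q = 1 \<and> col y' q = 3 \<and> col z q = 1) \<or>
      (col x q = 3 \<and> col y q = 1 \<and> col y' q = 1 \<and> col z q = 1)"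
    using xq_y'q by (auto simp: cayley_menger_def)
  then show False
  proof
    assume "col x q = 1 \<and> col y q = 1 \<and> col y' q = 3 \<and> col z q = 1"
    then show False
      using no_two_side_midpoints[OF S q(1)] cols by simp
  next
    assume "col x q = 3 \<and> col y q = 1 \<and> col y' q = 1 \<and> col z q = 1"
    moreover have "col y' y = 4" "col y' x = 4" "col y x = 4"
      using cols col_commute by metis+
    ultimately show False
      using no_two_side_midpoints[OF S(3,2,1,4) q(1)] cols by simp
  qed
qed

theorem hypotenuse_partner_unique:
  assumes S: "x \<in> S" "y \<in> S" "y' \<in> S" and "x \<noteq> y" "x \<noteq> y'"
    and cols: "col x y = 4" "col x y' = 4"
  shows "y = y'"
proof (rule ccontr)
  assume "y \<noteq> y'"
  obtain z where z: "z \<in> S" "z \<noteq> x" "z \<noteq> y" "{4, col x z, col y z} = {1, 3, 4}"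
    using covered[OF S(1,2) \<open>x \<noteq> y\<close>] cols(1) by auto
  have xz_yz: "(col x z = 1 \<and> col y z = 3) \<or> (col x z = 3 \<and> col y z = 1)"
    using z(4) by (rule insert_4_eq_134)
  then have "y' \<noteq> z"
    using cols by (auto simp: col_commute)
  then have "col y y' \<in> {1, 3, 4}" "col y' z \<in> {1, 3, 4}"
    using S z(1) \<open>y \<noteq> y'\<close> by (metis col_in_134)+
  moreover have "cayley_menger 4 4 (col x z) (col y y') (col y z) (col y' z) = 0"
    using cayley_menger_col_eq_0[of x y y' z] S z \<open>x \<noteq> y\<close> \<open>x \<noteq> y'\<close> \<open>y \<noteq> y'\<close> \<open>y' \<noteq> z\<close>
    by (simp add: cols)
  ultimately have "col y y' = 4 \<and> ((col x z = 1 \<and> col y z = 3 \<and> col y' z = 1) \<or>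
      (col x z = 3 \<and> col y z = 1 \<and> col y' z = 1))"
    using xz_yz by (auto simp: cayley_menger_def)
  then show False
  proof (elim conjE disjE)
    assume "col y y' = 4" "col x z = 1" "col y z = 3" "col y' z = 1"
    then show False
      using no_equilateral_with_midpoint[OF S z(1) \<open>x \<noteq> y'\<close>] cols by simp
  next
    assume "col y y' = 4" "col x z = 3" "col y z = 1" "col y' z = 1"
    moreover have "col y x = 4"
      using cols col_commute by metis
    ultimately show False
      using no_equilateral_with_midpoint[OF S(2,1,3) z(1) \<open>y \<noteq> y'\<close>] cols by simp
  qed
qed

end

section \<open>The Lagrangian bound\<close>

definition pairs_covered :: "'a set set \<Rightarrow> 'a set \<Rightarrow> bool" where
  "pairs_covered E S \<longleftrightarrow> (\<forall>u \<in> S. \<forall>v \<in> S. u \<noteq> v \<longrightarrow> (\<exists>z \<in> S. {u, v, z} \<in> E))"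

lemma card_3_obtain_third:
  assumes "card e = 3" "u \<in> e" "v \<in> e" "u \<noteq> v"
  obtains z where "e = {u, v, z}" "z \<noteq> u" "z \<noteq> v"
proof -
  have "card (e - {u, v}) = 1"
    using assms by (simp add: card_Diff_subset)
  then obtain z where "e - {u, v} = {z}"
    by (auto simp: card_Suc_eq)
  then show ?thesis
    using that assms(2,3) by blast
qed

lemma prod_pair_complement_le:
  fixes a b s :: real
  assumes "a \<ge> 0" "b \<ge> 0" "a + b \<le> s"
  shows "a * b * (s - a - b) \<le> (a + b) * s\<^sup>2 / 16"
proof -
  have "a * b \<le> (a + b)\<^sup>2 / 4"
    using sum_squares_ge_zero[of "a - b" 0] by (simp add: power2_eq_square algebra_simps)
  then have "a * b * (s - a - b) \<le> (a + b)\<^sup>2 / 4 * (s - a - b)"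
    using assms by (intro mult_right_mono) auto
  also have "\<dots> = (a + b) / 4 * ((a + b) * (s - (a + b)))"
    by (simp add: power2_eq_square field_simps)
  also have "\<dots> \<le> (a + b) / 4 * (s\<^sup>2 / 4)"
    using assms sum_squares_ge_zero[of "s - 2 * (a + b)" 0]
    by (intro mult_left_mono) (auto simp: power2_eq_square algebra_simps)
  finally show ?thesis
    by simp
qed

lemma sum_edges_containing_pair_le:
  fixes w :: "'a \<Rightarrow> real"
  assumes "finite V" and E: "\<And>e. e \<in> E \<Longrightarrow> e \<subseteq> V \<and> card e = 3"
    and w: "\<And>v. v \<in> V \<Longrightarrow> w v \<ge> 0" and "x \<in> V" "y \<in> V" "x \<noteq> y"
  shows "(\<Sum>e \<in> {e \<in> E. x \<in> e \<and> y \<in> e}. prod w e) \<le> (w x + w y) * (sum w V)\<^sup>2 / 16"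
proof -
  let ?third = "\<lambda>z. {x, y, z}"
  have "{e \<in> E. x \<in> e \<and> y \<in> e} \<subseteq> ?third ` (V - {x, y})"
  proof
    fix e assume e: "e \<in> {e \<in> E. x \<in> e \<and> y \<in> e}"
    then obtain z where "e = {x, y, z}" "z \<noteq> x" "z \<noteq> y"
      using E[of e] \<open>x \<noteq> y\<close> card_3_obtain_third[of e x y] by auto
    then show "e \<in> ?third ` (V - {x, y})"
      using e E by auto
  qed
  then have "(\<Sum>e \<in> {e \<in> E. x \<in> e \<and> y \<in> e}. prod w e) \<le> (\<Sum>e \<in> ?third ` (V - {x, y}). prod w e)"
    using assms by (intro sum_mono2) (auto intro!: prod_nonneg)
  also have "\<dots> = (\<Sum>z \<in> V - {x, y}. prod w {x, y, z})"
    by (intro sum.reindex_cong[of ?third]) (auto simp: inj_on_def)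
  also have "\<dots> = (\<Sum>z \<in> V - {x, y}. w x * w y * w z)"
    using \<open>x \<noteq> y\<close> by (intro sum.cong) auto
  also have "\<dots> = w x * w y * (sum w V - w x - w y)"
    using assms by (simp add: sum_distrib_left[symmetric] sum_diff)
  also have "\<dots> \<le> (w x + w y) * (sum w V)\<^sup>2 / 16"
  proof (rule prod_pair_complement_le)
    have "sum w {x, y} \<le> sum w V"
      using assms by (intro sum_mono2) auto
    then show "w x + w y \<le> sum w V"
      using \<open>x \<noteq> y\<close> by simp
  qed (use w assms in auto)
  finally show ?thesis .
qed

lemma sum_matching_le:
  fixes w :: "'a \<Rightarrow> real" and Q :: "'a \<Rightarrow> 'a \<Rightarrow> bool"
  assumes "finite V" and Q_sym: "\<And>x y. Q x y \<Longrightarrow> Q y x"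
    and Q_unique: "\<And>x y y'. \<lbrakk>x \<in> V; y \<in> V; y' \<in> V; Q x y; Q x y'\<rbrakk> \<Longrightarrow> y = y'"
    and w: "\<And>v. v \<in> V \<Longrightarrow> w v \<ge> 0"
  shows "(\<Sum>p \<in> {p \<in> V \<times> V. Q (fst p) (snd p)}. w (fst p) + w (snd p)) \<le> 2 * sum w V"
proof -
  define M where "M = {p \<in> V \<times> V. Q (fst p) (snd p)}"
  have "inj_on fst M"
  proof (rule inj_onI)
    fix p q assume "p \<in> M" "q \<in> M" "fst p = fst q"
    then have "snd p = snd q"
      using Q_unique[of "fst p" "snd p" "snd q"] by (auto simp: M_def mem_Times_iff)
    then show "p = q"
      using \<open>fst p = fst q\<close> by (simp add: prod_eq_iff)
  qed
  moreover have "inj_on snd M"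
  proof (rule inj_onI)
    fix p q assume "p \<in> M" "q \<in> M" "snd p = snd q"
    then have "fst p = fst q"
      using Q_unique[of "snd p" "fst p" "fst q"] Q_sym by (auto simp: M_def mem_Times_iff)
    then show "p = q"
      using \<open>snd p = snd q\<close> by (simp add: prod_eq_iff)
  qed
  ultimately have "(\<Sum>p \<in> M. w (fst p)) = sum w (fst ` M)" "(\<Sum>p \<in> M. w (snd p)) = sum w (snd ` M)"
    by (simp_all add: sum.reindex)
  moreover have "sum w (fst ` M) \<le> sum w V" "sum w (snd ` M) \<le> sum w V"
    using assms by (auto simp: M_def intro!: sum_mono2)
  ultimately show ?thesis
    by (simp add: sum.distrib M_def)
qed

lemma finite_edges:
  "finite V \<Longrightarrow> (\<And>e. e \<in> E \<Longrightarrow> e \<subseteq> V) \<Longrightarrow> finite E"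
  by (meson PowI finite_Pow_iff finite_subset subsetI)

lemma lagrangian_le_of_matching:
  fixes w :: "'a \<Rightarrow> real" and R :: "'a \<Rightarrow> 'a \<Rightarrow> bool"
  assumes "finite V" and E: "\<And>e. e \<in> E \<Longrightarrow> e \<subseteq> V \<and> card e = 3" and w: "\<And>v. v \<in> V \<Longrightarrow> w v \<ge> 0"
    and R_sym: "\<And>x y. R x y \<Longrightarrow> R y x"
    and R_in_edge: "\<And>e. e \<in> E \<Longrightarrow> \<exists>x \<in> e. \<exists>y \<in> e. x \<noteq> y \<and> R x y"
    and matching: "\<And>x y y'. \<lbrakk>x \<in> V; y \<in> V; y' \<in> V; w x \<noteq> 0; w y \<noteq> 0; w y' \<noteq> 0;
      x \<noteq> y; x \<noteq> y'; R x y; R x y'\<rbrakk> \<Longrightarrow> y = y'"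
  shows "(\<Sum>e \<in> E. prod w e) \<le> (sum w V)^3 / 16"
proof -
  define s where "s = sum w V"
  define Q where "Q = (\<lambda>x y. w x \<noteq> 0 \<and> w y \<noteq> 0 \<and> x \<noteq> y \<and> R x y)"
  define M where "M = {p \<in> V \<times> V. Q (fst p) (snd p)}"
  define f where "f = (\<lambda>e p. if fst p \<in> e \<and> snd p \<in> e then prod w e else 0)"
  have "finite E"
    using finite_edges[OF \<open>finite V\<close>] E by blast
  have "M \<subseteq> V \<times> V"
    by (auto simp: M_def)
  then have "finite M"
    using \<open>finite V\<close> finite_subset by blast
  have double: "2 * prod w e \<le> (\<Sum>p \<in> M. f e p)" if "e \<in> E" for e
  proof (cases "prod w e = 0")
    case True
    then show ?thesis
      using that E w by (auto simp: f_def intro!: sum_nonneg)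
  next
    case False
    then have "w v \<noteq> 0" if "v \<in> e" for v
      using that E[OF \<open>e \<in> E\<close>] by (metis card.infinite prod_zero_iff zero_neq_numeral)
    moreover obtain x y where "x \<in> e" "y \<in> e" "x \<noteq> y" "R x y"
      using R_in_edge[OF \<open>e \<in> E\<close>] by blast
    ultimately have "{(x, y), (y, x)} \<subseteq> M"
      using E[OF \<open>e \<in> E\<close>] R_sym by (auto simp: M_def Q_def)
    then have "(\<Sum>p \<in> {(x, y), (y, x)}. f e p) \<le> (\<Sum>p \<in> M. f e p)"
      using \<open>finite M\<close> \<open>e \<in> E\<close> E w by (intro sum_mono2) (auto simp: f_def intro!: prod_nonneg)
    then show ?thesis
      using \<open>x \<in> e\<close> \<open>y \<in> e\<close> \<open>x \<noteq> y\<close> by (simp add: f_def)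
  qed
  have pair: "(\<Sum>e \<in> E. f e p) \<le> (w (fst p) + w (snd p)) * s\<^sup>2 / 16" if "p \<in> M" for p
  proof -
    have "(\<Sum>e \<in> E. f e p) = (\<Sum>e \<in> {e \<in> E. fst p \<in> e \<and> snd p \<in> e}. prod w e)"
      using \<open>finite E\<close> by (simp add: f_def sum.inter_filter)
    also have "\<dots> \<le> (w (fst p) + w (snd p)) * s\<^sup>2 / 16"
      unfolding s_def using assms(1) E w by (rule sum_edges_containing_pair_le)
        (use that in \<open>auto simp: M_def Q_def\<close>)
    finally show ?thesis .
  qed
  have "2 * (\<Sum>e \<in> E. prod w e) = (\<Sum>e \<in> E. 2 * prod w e)"
    by (rule sum_distrib_left)
  also have "\<dots> \<le> (\<Sum>e \<in> E. \<Sum>p \<in> M. f e p)"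
    using double by (rule sum_mono)
  also have "\<dots> = (\<Sum>p \<in> M. \<Sum>e \<in> E. f e p)"
    by (rule sum.swap)
  also have "\<dots> \<le> (\<Sum>p \<in> M. (w (fst p) + w (snd p)) * s\<^sup>2 / 16)"
    using pair by (rule sum_mono)
  also have "\<dots> = s\<^sup>2 / 16 * (\<Sum>p \<in> M. w (fst p) + w (snd p))"
    by (simp add: sum_distrib_left mult.commute)
  also have "\<dots> \<le> s\<^sup>2 / 16 * (2 * s)"
  proof (rule mult_left_mono)
    have "Q y x" if "Q x y" for x y
      using that R_sym by (auto simp: Q_def)
    moreover have "y = y'" if "x \<in> V" "y \<in> V" "y' \<in> V" "Q x y" "Q x y'" for x y y'
      using that matching[of x y y'] by (simp add: Q_def)
    ultimately show "(\<Sum>p \<in> M. w (fst p) + w (snd p)) \<le> 2 * s"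
      unfolding s_def M_def using \<open>finite V\<close> w by (intro sum_matching_le)
  qed simp
  finally show ?thesis
    by (simp add: s_def power2_eq_square power3_eq_cube)
qed

lemma prod_merge_weight:
  fixes w :: "'a \<Rightarrow> real"
  assumes "finite e" "u \<noteq> v" and zero: "u \<in> e \<Longrightarrow> v \<in> e \<Longrightarrow> prod w e = 0"
  shows "prod (w(u := w u + w v, v := 0)) e = prod w e + w v *
    ((if u \<in> e \<and> v \<notin> e then prod w (e - {u}) else 0) - (if v \<in> e \<and> u \<notin> e then prod w (e - {v}) else 0))"
proof -
  let ?w' = "w(u := w u + w v, v := 0)"
  consider "u \<in> e" "v \<notin> e" | "v \<in> e" | "u \<notin> e" "v \<notin> e"
    by blast
  then show ?thesis
  proof cases
    case 1
    have "prod ?w' e = ?w' u * prod ?w' (e - {u})"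
      using assms(1) \<open>u \<in> e\<close> by (rule prod.remove)
    also have "?w' u = w u + w v"
      using assms(2) by simp
    also have "prod ?w' (e - {u}) = prod w (e - {u})"
      using 1 by (intro prod.cong) auto
    finally have merged: "prod ?w' e = (w u + w v) * prod w (e - {u})" .
    have "prod w e = w u * prod w (e - {u})"
      using assms(1) \<open>u \<in> e\<close> by (rule prod.remove)
    then show ?thesis
      unfolding merged using 1 by (simp add: algebra_simps)
  next
    case 2
    then have "prod ?w' e = 0"
      using assms(1) by (metis fun_upd_same prod_zero_iff)
    then show ?thesis
      using zero 2 prod.remove[OF assms(1) 2, of w] by auto
  next
    case 3
    then have "prod ?w' e = prod w e"
      by (intro prod.cong) auto
    then show ?thesis
      using 3 by simp
  qed
qed

lemma sum_prod_merge_weight_ge: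
  fixes w :: "'a \<Rightarrow> real"
  assumes "finite E" "\<And>e. e \<in> E \<Longrightarrow> finite e" "u \<noteq> v" "w v \<ge> 0"
    and zero: "\<And>e. e \<in> E \<Longrightarrow> u \<in> e \<Longrightarrow> v \<in> e \<Longrightarrow> prod w e = 0"
    and le: "(\<Sum>e \<in> E. if v \<in> e \<and> u \<notin> e then prod w (e - {v}) else 0)
      \<le> (\<Sum>e \<in> E. if u \<in> e \<and> v \<notin> e then prod w (e - {u}) else 0)"
  shows "(\<Sum>e \<in> E. prod w e) \<le> (\<Sum>e \<in> E. prod (w(u := w u + w v, v := 0)) e)"
proof -
  let ?A = "\<lambda>e. if u \<in> e \<and> v \<notin> e then prod w (e - {u}) else 0"
  let ?B = "\<lambda>e. if v \<in> e \<and> u \<notin> e then prod w (e - {v}) else 0"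
  have "(\<Sum>e \<in> E. prod (w(u := w u + w v, v := 0)) e) = (\<Sum>e \<in> E. prod w e + w v * (?A e - ?B e))"
    using assms(2,3) zero by (intro sum.cong refl prod_merge_weight) auto
  also have "\<dots> = (\<Sum>e \<in> E. prod w e) + w v * (sum ?A E - sum ?B E)"
    by (simp add: sum.distrib sum_distrib_left sum_subtractf right_diff_distrib)
  finally show ?thesis
    using le \<open>w v \<ge> 0\<close> by simp
qed

lemma sum_merge_weight:
  fixes w :: "'a \<Rightarrow> real"
  assumes "finite V" "u \<in> V" "v \<in> V" "u \<noteq> v"
  shows "sum (w(u := w u + w v, v := 0)) V = sum w V"
proof -
  have split: "sum g V = g u + g v + sum g (V - {u} - {v})" for g :: "'a \<Rightarrow> real"
    using assms sum.remove[OF assms(1,2), of g] sum.remove[of "V - {u}" v g] by simp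
  have "sum (w(u := w u + w v, v := 0)) (V - {u} - {v}) = sum w (V - {u} - {v})"
    by (rule sum.cong) auto
  then show ?thesis
    using split[of "w(u := w u + w v, v := 0)"] split[of w] assms(4) by simp
qed

lemma prod_eq_0_of_uncovered_pair:
  fixes w :: "'a \<Rightarrow> real"
  assumes E: "\<And>e. e \<in> E \<Longrightarrow> e \<subseteq> V \<and> card e = 3" and "u \<noteq> v"
    and uncovered: "\<And>z. z \<in> V \<Longrightarrow> w z \<noteq> 0 \<Longrightarrow> {u, v, z} \<notin> E"
    and "e \<in> E" "u \<in> e" "v \<in> e"
  shows "prod w e = 0"
proof -
  obtain z where "e = {u, v, z}"
    using card_3_obtain_third[of e u v] E assms(2,4-6) by blast
  moreover from this have "w z = 0"
    using uncovered E \<open>e \<in> E\<close> by auto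
  ultimately show ?thesis
    by simp
qed

text \<open>If no edge of positive weight contains both \<open>u\<close> and \<open>v\<close>, the Lagrangian is affine in
  the weight moved from \<open>v\<close> to \<open>u\<close>, so moving all of it in the better direction does not
  decrease it.\<close>

lemma merge_uncovered_pair:
  fixes w :: "'a \<Rightarrow> real"
  assumes "finite V" and E: "\<And>e. e \<in> E \<Longrightarrow> e \<subseteq> V" and w: "\<And>x. x \<in> V \<Longrightarrow> w x \<ge> 0"
    and uv: "u \<in> V" "v \<in> V" "u \<noteq> v" "w u \<noteq> 0" "w v \<noteq> 0"
    and zero: "\<And>e. e \<in> E \<Longrightarrow> u \<in> e \<Longrightarrow> v \<in> e \<Longrightarrow> prod w e = 0"
  obtains w' where "\<And>x. x \<in> V \<Longrightarrow> w' x \<ge> 0" "sum w' V = sum w V"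
    "{x \<in> V. w' x \<noteq> 0} \<subset> {x \<in> V. w x \<noteq> 0}" "(\<Sum>e \<in> E. prod w e) \<le> (\<Sum>e \<in> E. prod w' e)"
proof -
  let ?A = "\<lambda>a b. \<Sum>e \<in> E. if a \<in> e \<and> b \<notin> e then prod w (e - {a}) else 0"
  note result = that
  have merge: thesis if ab: "a \<in> V" "b \<in> V" "a \<noteq> b" "w a \<noteq> 0" "w b \<noteq> 0"
    and le: "?A b a \<le> ?A a b" and zero_ab: "\<And>e. e \<in> E \<Longrightarrow> a \<in> e \<Longrightarrow> b \<in> e \<Longrightarrow> prod w e = 0" for a b
  proof (rule result[of "w(a := w a + w b, b := 0)"])
    let ?w' = "w(a := w a + w b, b := 0)"
    show "?w' x \<ge> 0" if "x \<in> V" for x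
      using w[OF that] w[OF ab(1)] w[OF ab(2)] by simp
    show "sum ?w' V = sum w V"
      using \<open>finite V\<close> ab(1-3) by (rule sum_merge_weight)
    show "{x \<in> V. ?w' x \<noteq> 0} \<subset> {x \<in> V. w x \<noteq> 0}"
    proof (rule psubsetI)
      show "{x \<in> V. ?w' x \<noteq> 0} \<subseteq> {x \<in> V. w x \<noteq> 0}"
        using ab(4) by auto
      have "b \<in> {x \<in> V. w x \<noteq> 0}" "b \<notin> {x \<in> V. ?w' x \<noteq> 0}"
        using ab(2,5) by simp_all
      then show "{x \<in> V. ?w' x \<noteq> 0} \<noteq> {x \<in> V. w x \<noteq> 0}"
        by blast
    qed
    have "finite E"
      using \<open>finite V\<close> E by (rule finite_edges)
    moreover have "\<And>e. e \<in> E \<Longrightarrow> finite e"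
      using E \<open>finite V\<close> by (rule finite_subset)
    ultimately show "(\<Sum>e \<in> E. prod w e) \<le> (\<Sum>e \<in> E. prod ?w' e)"
      using ab(3) w[OF ab(2)] zero_ab le by (rule sum_prod_merge_weight_ge)
  qed
  show thesis
  proof (cases "?A v u \<le> ?A u v")
    case True
    show thesis
      using uv True zero by (rule merge)
  next
    case False
    then have "?A u v \<le> ?A v u"
      by linarith
    moreover have "\<And>e. e \<in> E \<Longrightarrow> v \<in> e \<Longrightarrow> u \<in> e \<Longrightarrow> prod w e = 0"
      using zero by blast
    ultimately show thesis
      by (rule merge[OF uv(2,1) uv(3)[symmetric] uv(5,4)])
  qed
qed

theorem lagrangian_le:
  fixes w :: "'a \<Rightarrow> real" and R :: "'a \<Rightarrow> 'a \<Rightarrow> bool"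
  assumes "finite V" and E: "\<And>e. e \<in> E \<Longrightarrow> e \<subseteq> V \<and> card e = 3"
    and R_sym: "\<And>x y. R x y \<Longrightarrow> R y x"
    and R_in_edge: "\<And>e. e \<in> E \<Longrightarrow> \<exists>x \<in> e. \<exists>y \<in> e. x \<noteq> y \<and> R x y"
    and matching: "\<And>S x y y'. \<lbrakk>S \<subseteq> V; pairs_covered E S; x \<in> S; y \<in> S; y' \<in> S;
      x \<noteq> y; x \<noteq> y'; R x y; R x y'\<rbrakk> \<Longrightarrow> y = y'"
    and w: "\<And>x. x \<in> V \<Longrightarrow> w x \<ge> 0"
  shows "(\<Sum>e \<in> E. prod w e) \<le> (sum w V)^3 / 16"
  using w
proof (induction "card {x \<in> V. w x \<noteq> 0}" arbitrary: w rule: less_induct)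
  case less
  define S where "S = {x \<in> V. w x \<noteq> 0}"
  show ?case
  proof (cases "pairs_covered E S")
    case True
    show ?thesis
      using assms(1) E less.prems R_sym R_in_edge
    proof (rule lagrangian_le_of_matching)
      show "y = y'" if "x \<in> V" "y \<in> V" "y' \<in> V" "w x \<noteq> 0" "w y \<noteq> 0" "w y' \<noteq> 0"
        "x \<noteq> y" "x \<noteq> y'" "R x y" "R x y'" for x y y'
        using matching[of S x y y'] True that by (auto simp: S_def)
    qed
  next
    case False
    then obtain u v where uv: "u \<in> S" "v \<in> S" "u \<noteq> v" and uncovered: "\<forall>z \<in> S. {u, v, z} \<notin> E"
      unfolding pairs_covered_def by blast
    have zero: "prod w e = 0" if "e \<in> E" "u \<in> e" "v \<in> e" for e
      by (rule prod_eq_0_of_uncovered_pair[OF E uv(3) _ that]) (use uncovered in \<open>auto simp: S_def\<close>)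
    have uvV: "u \<in> V" "v \<in> V" "w u \<noteq> 0" "w v \<noteq> 0"
      using uv(1,2) by (simp_all add: S_def)
    have edges: "\<And>e. e \<in> E \<Longrightarrow> e \<subseteq> V"
      using E by blast
    obtain w' where w': "\<And>x. x \<in> V \<Longrightarrow> w' x \<ge> 0" "sum w' V = sum w V"
      "{x \<in> V. w' x \<noteq> 0} \<subset> {x \<in> V. w x \<noteq> 0}" "(\<Sum>e \<in> E. prod w e) \<le> (\<Sum>e \<in> E. prod w' e)"
      using merge_uncovered_pair[of V E w u v, OF assms(1) edges less.prems uvV(1,2) uv(3) uvV(3,4) zero] by blast
    have "card {x \<in> V. w' x \<noteq> 0} < card {x \<in> V. w x \<noteq> 0}"
      using w'(3) assms(1) by (intro psubset_card_mono) auto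
    then have "(\<Sum>e \<in> E. prod w' e) \<le> (sum w' V)^3 / 16"
      using w'(1) by (rule less.hyps)
    then show ?thesis
      using w'(2,4) by simp
  qed
qed

section \<open>Counting near-congruent triangles\<close>

definition side_class :: "real \<Rightarrow> pt \<Rightarrow> pt \<Rightarrow> real" where
  "side_class L p q =
    (if \<bar>(dist p q)\<^sup>2 - L\<^sup>2\<bar> \<le> L\<^sup>2 / 10000 then 1
     else if \<bar>(dist p q)\<^sup>2 - 3 * L\<^sup>2\<bar> \<le> L\<^sup>2 / 10000 then 3
     else if \<bar>(dist p q)\<^sup>2 - 4 * L\<^sup>2\<bar> \<le> L\<^sup>2 / 10000 then 4 else 0)"

lemma side_class_commute: "side_class L p q = side_class L q p"
  by (simp add: side_class_def dist_commute)

lemma side_class_eqI: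
  assumes "L > 0" "k \<in> {1, 3, 4}" "\<bar>(dist p q)\<^sup>2 - k * L\<^sup>2\<bar> \<le> L\<^sup>2 / 10000"
  shows "side_class L p q = k"
proof -
  define d where "d = L\<^sup>2 / 10000"
  have "d > 0" "L\<^sup>2 = 10000 * d"
    using \<open>L > 0\<close> by (simp_all add: d_def)
  then show ?thesis
    using assms(2,3) unfolding side_class_def d_def[symmetric] abs_le_iff by auto
qed

lemma side_class_approx:
  assumes "side_class L p q \<in> {1, 3, 4}"
  shows "\<bar>(dist p q)\<^sup>2 - side_class L p q * L\<^sup>2\<bar> \<le> L\<^sup>2 / 10000"
  using assms by (auto simp: side_class_def split: if_splits)

lemma side_class_of_near_points:
  fixes a b A B :: pt
  assumes "L > 0" "(dist A B)\<^sup>2 / L\<^sup>2 \<in> {1, 3, 4}"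
    and "dist a A \<le> L / 100000" "dist b B \<le> L / 100000"
  shows "side_class L a b = (dist A B)\<^sup>2 / L\<^sup>2"
proof (rule side_class_eqI[OF \<open>L > 0\<close> assms(2)])
  have "dist a b \<le> dist a A + dist A B + dist B b" "dist A B \<le> dist A a + dist a b + dist b B"
    using dist_triangle[of a b A] dist_triangle[of A b B] dist_triangle[of A B a] dist_triangle[of a B b]
    by linarith+
  moreover have "dist A a \<le> L / 100000" "dist B b \<le> L / 100000"
    using assms(3,4) by (simp_all add: dist_commute)
  ultimately have close: "\<bar>dist a b - dist A B\<bar> \<le> L / 50000"
    unfolding abs_le_iff using assms(3,4) by (intro conjI; linarith)
  have "(dist A B)\<^sup>2 / L\<^sup>2 \<le> 4"
    using assms(2) by auto
  then have "(dist A B)\<^sup>2 \<le> (2 * L)\<^sup>2"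
    using \<open>L > 0\<close> by (simp add: pos_divide_le_eq power_mult_distrib)
  then have "dist A B \<le> 2 * L"
    by (rule power2_le_imp_le) (use \<open>L > 0\<close> in simp)
  have "(dist a b)\<^sup>2 - (dist A B)\<^sup>2 = (dist a b - dist A B) * (dist a b + dist A B)"
    by (simp add: power2_eq_square algebra_simps)
  then have "\<bar>(dist a b)\<^sup>2 - (dist A B)\<^sup>2\<bar> = \<bar>dist a b - dist A B\<bar> * (dist a b + dist A B)"
    by (simp add: abs_mult)
  also have "\<dots> \<le> L / 50000 * (4 * L + L / 50000)"
  proof (rule mult_mono[OF close])
    show "dist a b + dist A B \<le> 4 * L + L / 50000"
      using close \<open>dist A B \<le> 2 * L\<close> by linarith
  qed (use \<open>L > 0\<close> in auto)
  also have "\<dots> \<le> L\<^sup>2 / 10000"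
    using \<open>L > 0\<close> by (simp add: power2_eq_square field_simps)
  finally show "\<bar>(dist a b)\<^sup>2 - (dist A B)\<^sup>2 / L\<^sup>2 * L\<^sup>2\<bar> \<le> L\<^sup>2 / 10000"
    using \<open>L > 0\<close> by simp
qed

lemma side_classes_of_eps_congruent:
  assumes T: "triangle_type T 90 60 30" and cong: "eps_congruent (1 / 100000) T a b c"
  shows "{side_class (min_side T) a b, side_class (min_side T) b c, side_class (min_side T) a c} = {1, 3, 4}"
proof -
  obtain TA TB TC where T_def: "T = (TA, TB, TC)"
    by (cases T) auto
  define L where "L = min_side T"
  have "L > 0" and sides: "sq_sides TA TB TC = {L\<^sup>2, 3 * L\<^sup>2, 4 * L\<^sup>2}"
    using triangle_90_60_30_sq_sides T by (simp_all add: T_def L_def)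
  obtain A B C where ABC: "dist A B = dist TA TB" "dist B C = dist TB TC" "dist A C = dist TA TC"
    "dist a A \<le> L / 100000" "dist b B \<le> L / 100000" "dist c C \<le> L / 100000"
    using cong by (auto simp: eps_congruent_def T_def L_def)
  have ratios: "(\<lambda>x. x / L\<^sup>2) ` sq_sides A B C = {1, 3, 4}"
    using sides \<open>L > 0\<close> by (simp add: sq_sides_def ABC)
  then have "side_class L a b = (dist A B)\<^sup>2 / L\<^sup>2" "side_class L b c = (dist B C)\<^sup>2 / L\<^sup>2"
    "side_class L a c = (dist A C)\<^sup>2 / L\<^sup>2"
    using ABC(4-6) \<open>L > 0\<close> by (auto simp: sq_sides_def intro!: side_class_of_near_points)
  then show ?thesis
    using ratios by (simp add: sq_sides_def L_def)
qed

lemma cayley_menger_side_classes: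
  assumes "L > 0"
    and "side_class L p0 p1 \<in> {1, 3, 4}" "side_class L p0 p2 \<in> {1, 3, 4}" "side_class L p0 p3 \<in> {1, 3, 4}"
      "side_class L p1 p2 \<in> {1, 3, 4}" "side_class L p1 p3 \<in> {1, 3, 4}" "side_class L p2 p3 \<in> {1, 3, 4}"
  shows "cayley_menger (side_class L p0 p1) (side_class L p0 p2) (side_class L p0 p3)
      (side_class L p1 p2) (side_class L p1 p3) (side_class L p2 p3) = 0"
proof -
  have approx: "\<bar>(dist p q)\<^sup>2 - side_class L p q * L\<^sup>2\<bar> \<le> 1 / 10000 * L\<^sup>2"
    if "side_class L p q \<in> {1, 3, 4}" for p q
    using side_class_approx[OF that] by simp
  show ?thesis
    by (rule cayley_menger_eq_0_of_approx_sq_dists[OF \<open>L > 0\<close> _ assms(2-7) approx[OF assms(2)]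
          approx[OF assms(3)] approx[OF assms(4)] approx[OF assms(5)] approx[OF assms(6)] approx[OF assms(7)]])
      simp
qed

lemma triangle_covered_coloring_side_class:
  assumes "L > 0"
    and "\<And>u v. u \<in> S \<Longrightarrow> v \<in> S \<Longrightarrow> u \<noteq> v \<Longrightarrow>
      \<exists>z \<in> S. z \<noteq> u \<and> z \<noteq> v \<and> {side_class L u v, side_class L u z, side_class L v z} = {1, 3, 4}"
  shows "triangle_covered_coloring S (side_class L)"
  using assms by unfold_locales (simp_all add: side_class_commute cayley_menger_side_classes)

lemma side_classes_relabel:
  assumes "{u, v, z} = {a, b, c}" "u \<noteq> v" "u \<noteq> z" "v \<noteq> z"
  shows "{side_class L u v, side_class L u z, side_class L v z} = {side_class L a b, side_class L b c, side_class L a c}"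
  using insert3_eq_distinct_cases[OF assms(1)[symmetric] assms(2,4,3)]
  by (auto simp: side_class_commute)

definition congruent_triples :: "real \<Rightarrow> pt \<times> pt \<times> pt \<Rightarrow> pt set \<Rightarrow> pt set set" where
  "congruent_triples \<epsilon> T P =
    {S. S \<subseteq> P \<and> card S = 3 \<and> (\<exists>a b c. S = {a, b, c} \<and> eps_congruent \<epsilon> T a b c)}"

lemma congruent_triple_distinct:
  "{u, v, z} \<in> congruent_triples \<epsilon> T P \<Longrightarrow> u \<noteq> v \<and> u \<noteq> z \<and> v \<noteq> z"
  by (auto simp: congruent_triples_def card_insert_if split: if_splits)

lemma congruent_triple_side_classes:
  assumes T: "triangle_type T 90 60 30" and uvz: "{u, v, z} \<in> congruent_triples (1 / 100000) T P"
  shows "{side_class (min_side T) u v, side_class (min_side T) u z, side_class (min_side T) v z} = {1, 3, 4}"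
proof -
  obtain a b c where abc: "{u, v, z} = {a, b, c}" "eps_congruent (1 / 100000) T a b c"
    using uvz unfolding congruent_triples_def by blast
  then show ?thesis
    using side_classes_relabel[OF abc(1)] congruent_triple_distinct[OF uvz]
      side_classes_of_eps_congruent[OF T abc(2)] by simp
qed

lemma count_cong_90_60_30_le:
  assumes T: "triangle_type T 90 60 30" and "finite P"
  shows "real (count_cong (1 / 100000) T P) \<le> real (card P) ^ 3 / 16"
proof -
  define L where "L = min_side T"
  define E where "E = congruent_triples (1 / 100000) T P"
  have "L > 0"
    using T triangle_90_60_30_sq_sides(1) unfolding L_def by (metis prod_cases3)
  have E: "\<And>e. e \<in> E \<Longrightarrow> e \<subseteq> P \<and> card e = 3"
    by (simp add: E_def congruent_triples_def)
  note distinct = congruent_triple_distinct[of _ _ _ "1 / 100000" T P, folded E_def]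
  note classes = congruent_triple_side_classes[OF T, of _ _ _ P, folded E_def L_def]
  have "(\<Sum>e \<in> E. prod (\<lambda>_. 1::real) e) \<le> (sum (\<lambda>_. 1::real) P)^3 / 16"
  proof (rule lagrangian_le[where R = "\<lambda>x y. side_class L x y = 4"])
    show "\<exists>x \<in> e. \<exists>y \<in> e. x \<noteq> y \<and> side_class L x y = 4" if e: "e \<in> E" for e
    proof -
      obtain a b c where abc: "e = {a, b, c}"
        using e unfolding E_def congruent_triples_def by blast
      then have "4 \<in> {side_class L a b, side_class L a c, side_class L b c}"
        using classes e by blast
      then show ?thesis
        using distinct e abc by auto
    qed
    show "y = y'" if "S \<subseteq> P" "pairs_covered E S" "x \<in> S" "y \<in> S" "y' \<in> S" "x \<noteq> y" "x \<noteq> y'"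
      "side_class L x y = 4" "side_class L x y' = 4" for S x y y'
    proof -
      interpret triangle_covered_coloring S "side_class L"
      proof (rule triangle_covered_coloring_side_class[OF \<open>L > 0\<close>])
        fix u v assume "u \<in> S" "v \<in> S" "u \<noteq> v"
        then obtain z where z: "z \<in> S" "{u, v, z} \<in> E"
          using \<open>pairs_covered E S\<close> unfolding pairs_covered_def by blast
        then show "\<exists>z \<in> S. z \<noteq> u \<and> z \<noteq> v \<and> {side_class L u v, side_class L u z, side_class L v z} = {1, 3, 4}"
          using z(1) classes[OF z(2)] distinct[OF z(2)] by (intro bexI[of _ z] conjI) auto
      qed
      show ?thesis
        using hypotenuse_partner_unique that(3-9) .
    qed
  qed (simp_all add: \<open>finite P\<close> E side_class_commute)
  then show ?thesis
    by (simp add: count_cong_def E_def congruent_triples_def)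
qed

lemma h_le_of_count_cong_le:
  assumes "\<epsilon> > 0" "B \<ge> 0" and bound: "\<And>P. finite P \<Longrightarrow> card P = n \<Longrightarrow> real (count_cong \<epsilon> T P) \<le> B"
  shows "real (h n T) \<le> B"
proof -
  define X where "X = {count_cong \<epsilon> T P | P. finite P \<and> card P = n}"
  have X_bound: "real k \<le> B" if "k \<in> X" for k
    using that bound by (auto simp: X_def)
  have "h n T \<le> h_eps n T \<epsilon>"
    unfolding h_def using \<open>\<epsilon> > 0\<close> by (intro cInf_lower) auto
  also have "h_eps n T \<epsilon> = Sup X"
    by (simp add: h_eps_def X_def)
  finally have "h n T \<le> Sup X" .
  moreover have "real (Sup X) \<le> B"
  proof (cases "X = {}")
    case False
    have "X \<subseteq> {..nat \<lfloor>B\<rfloor>}"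
      using X_bound by (auto simp: le_nat_floor)
    then have "finite X"
      by (rule finite_subset) simp
    then have "Sup X \<in> X"
      using False by (simp add: Sup_nat_def)
    then show ?thesis
      by (rule X_bound)
  qed (simp add: \<open>B \<ge> 0\<close>)
  ultimately show ?thesis
    by (meson of_nat_le_iff order_trans)
qed

theorem lemma3p4:
  fixes T :: "pt \<times> pt \<times> pt" and n :: nat
  assumes "triangle_type T 90 60 30" and "n \<ge> 1"
  shows "real (h n T) \<le> real n ^ 3 / 16"
  \<comment> \<open>the bound also holds for \<open>n = 0\<close>\<close>
  using count_cong_90_60_30_le[OF assms(1)] by (intro h_le_of_count_cong_le[where \<epsilon> = "1 / 100000"]) auto

end
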